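(* Let $0<\lambda\le1$, $f\in\mathcal U(\lambda)$ and $a_2=f''(0)/2$. Then $$\frac{z}{f(z)}+a_2z\prec 1+2\lambda z+\lambda z^2,\qquad z\in\mathbb D.$$
   Context: $\mathbb D=\{z\in\mathbb C:|z|<1\}$. $\mathcal A$ is the class of functions $f$ analytic in $\mathbb D$ with $f(z)=z+\sum_{k\ge2}a_kz^k$. For $f\in\mathcal A$ with $f(z)\ne0$ for $z\in\mathbb D\setminus\{0\}$, set $U_f(z)=\left(\frac{z}{f(z)}\right)^2f'(z)-1$. For $0<\lambda\le1$, $\mathcal U(\lambda)$ is the class of such $f\in\mathcal A$ with $|U_f(z)|<\lambda$ for all $z\in\mathbb D$. For $g,h$ analytic in $\mathbb D$, $g\prec h$ (subordination) means $g=h\circ\omega$ for some analytic $\omega:\mathbb D\to\mathbb D$ with $\omega(0)=0$. *)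

theory Defs
  imports "HOL-Complex_Analysis.Complex_Analysis"
begin

abbreviation unit_disk :: "complex set" where
  "unit_disk \<equiv> ball 0 1"

definition class_A :: "(complex \<Rightarrow> complex) \<Rightarrow> bool" where
  "class_A f \<longleftrightarrow> f holomorphic_on unit_disk \<and> f 0 = 0 \<and> deriv f 0 = 1"

text \<open>z / f(z), extended by its limit value 1 at the removable singularity z = 0
  (for f in class A, f(z) = z + ..., so z/f(z) tends to 1).\<close>
definition z_over_f :: "(complex \<Rightarrow> complex) \<Rightarrow> complex \<Rightarrow> complex" where
  "z_over_f f z = (if z = 0 then 1 else z / f z)"

definition U_op :: "(complex \<Rightarrow> complex) \<Rightarrow> complex \<Rightarrow> complex" where
  "U_op f z = (z_over_f f z)\<^sup>2 * deriv f z - 1"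

definition class_U :: "real \<Rightarrow> (complex \<Rightarrow> complex) \<Rightarrow> bool" where
  "class_U lam f \<longleftrightarrow> class_A f \<and> (\<forall>z\<in>unit_disk - {0}. f z \<noteq> 0) \<and>
     (\<forall>z\<in>unit_disk. norm (U_op f z) < lam)"

definition subordinate :: "(complex \<Rightarrow> complex) \<Rightarrow> (complex \<Rightarrow> complex) \<Rightarrow> bool" where
  "subordinate g h \<longleftrightarrow> (\<exists>\<omega>. \<omega> holomorphic_on unit_disk \<and> \<omega> ` unit_disk \<subseteq> unit_disk \<and>
      \<omega> 0 = 0 \<and> (\<forall>z\<in>unit_disk. g z = h (\<omega> z)))"

end

theory Submission
  imports Defs
begin

text \<open>Write \<open>g(z) = z/f(z) + a\<^sub>2 z\<close>. Then \<open>g(0) = 1\<close>, \<open>g'(0) = 0\<close>, and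
  \<open>g - z g' - 1 = z/f - z (z/f)' - 1 = U\<^sub>f\<close>. Factoring \<open>g - 1 = z G\<close> gives
  \<open>U\<^sub>f = -z\<^sup>2 G'\<close>, and two applications of the Schwarz lemma turn \<open>\<bar>U\<^sub>f\<bar> < \<lambda>\<close> into
  \<open>\<bar>G'\<bar> \<le> \<lambda>\<close>, hence \<open>\<bar>g - 1\<bar> \<le> \<lambda>\<bar>z\<bar>\<^sup>2 < \<lambda>\<close>. Finally
  \<open>1 + 2\<lambda>w + \<lambda>w\<^sup>2 = 1 + \<lambda>((1 + w)\<^sup>2 - 1)\<close>, so \<open>\<omega> = \<surd>(1 + (g - 1)/\<lambda>) - 1\<close>
  is a Schwarz function realising the subordination.\<close>

lemma norm_csqrt_one_plus_minus_one_le: "norm (csqrt (1 + w) - 1) \<le> norm w"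
proof -
  define s where "s = csqrt (1 + w)"
  have "norm (s - 1) * norm (s + 1) = norm w"
    by (metis norm_mult power2_csqrt s_def power2_eq_square square_diff_one_factored
        add_diff_cancel_left' mult.commute)
  moreover have "1 \<le> norm (s + 1)"
  proof -
    have "0 \<le> Re s"
      unfolding s_def by (rule Re_csqrt)
    then show ?thesis
      using complex_Re_le_cmod[of "s + 1"] by simp
  qed
  then have "norm (s - 1) \<le> norm (s - 1) * norm (s + 1)"
    by (simp add: mult_le_cancel_left1)
  ultimately show ?thesis
    by (simp add: s_def)
qed

lemma Schwarz_Lemma_factor_bound:
  assumes holg: "g holomorphic_on ball 0 1"
    and bound: "\<And>z. norm z < 1 \<Longrightarrow> norm (z * g z) \<le> M"
    and z: "norm z < 1"
  shows "norm (g z) \<le> M"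
proof (rule dense_ge)
  \<comment> \<open>The Schwarz lemma needs a strict bound, so we bound by every \<open>M' > M\<close>; at \<open>z = 0\<close> the
    estimate comes from its derivative part, since \<open>(w g(w))'(0) = g(0)\<close>.\<close>
  fix M' assume "M < M'"
  then have M': "0 < M'"
    using bound[of 0] by simp
  define F where "F = (\<lambda>w. w * g w / of_real M')"
  have holF: "F holomorphic_on ball 0 1"
    unfolding F_def using holg M' by (intro holomorphic_intros) auto
  have F0: "F 0 = 0"
    by (simp add: F_def)
  have F_less: "norm (F w) < 1" if "norm w < 1" for w
    using bound[OF that] \<open>M < M'\<close> M' by (simp add: F_def norm_divide)
  show "norm (g z) \<le> M'"
  proof (cases "z = 0")
    case True
    have "(F has_field_derivative g 0 / of_real M') (at 0)"
      using holg M' by (auto simp: F_def intro!: derivative_eq_intros holomorphic_derivI)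
    then have "deriv F 0 = g 0 / of_real M'"
      by (rule DERIV_imp_deriv)
    moreover have "norm (deriv F 0) \<le> 1"
      using Schwarz_Lemma(2)[OF holF F0 F_less, of 0] by simp
    ultimately show ?thesis
      using True M' by (simp add: norm_divide)
  next
    case False
    have "norm (F z) \<le> norm z"
      using Schwarz_Lemma(1)[OF holF F0 F_less z] .
    then show ?thesis
      using False M' by (simp add: F_def norm_mult norm_divide field_simps)
  qed
qed

lemma norm_sub_one_le_of_norm_sub_mult_deriv_le:
  assumes holQ: "Q holomorphic_on ball 0 1" and Q0: "Q 0 = 1" and dQ0: "deriv Q 0 = 0"
    and bound: "\<And>z. norm z < 1 \<Longrightarrow> norm (Q z - z * deriv Q z - 1) \<le> M"
    and z: "norm z < 1"
  shows "norm (Q z - 1) \<le> M * norm z ^ 2"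
proof -
  have holQ1: "(\<lambda>w. Q w - 1) holomorphic_on ball 0 1"
    using holQ by (intro holomorphic_intros)
  obtain G where holG: "G holomorphic_on ball 0 1"
    and QG: "\<And>w. norm w < 1 \<Longrightarrow> Q w - 1 = w * G w"
    and dG0: "deriv (\<lambda>w. Q w - 1) 0 = G 0"
    by (rule Schwarz3[OF holQ1]) (auto simp: Q0)
  have "deriv (\<lambda>w. Q w - 1) 0 = deriv Q 0"
    using holQ by (simp add: holomorphic_on_imp_differentiable_at)
  then have G0: "G 0 = 0"
    using dG0 dQ0 by simp
  have holdG: "deriv G holomorphic_on ball 0 1"
    using holG by (rule holomorphic_deriv) simp
  have dQ: "deriv Q w = G w + w * deriv G w" if w: "norm w < 1" for w
  proof -
    have "((\<lambda>w. 1 + w * G w) has_field_derivative G w + w * deriv G w) (at w)"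
      using holG w by (auto intro!: derivative_eq_intros holomorphic_derivI)
    then have "(Q has_field_derivative G w + w * deriv G w) (at w)"
      by (rule has_field_derivative_transform_within_open[where S = "ball 0 1"])
         (use w QG in \<open>auto simp: algebra_simps\<close>)
    then show ?thesis
      by (rule DERIV_imp_deriv)
  qed
  \<comment> \<open>Since \<open>Q - z Q' - 1 = - z\<^sup>2 G'\<close>, two applications of the Schwarz bound give \<open>\<bar>G'\<bar> \<le> M\<close>.\<close>
  have "norm (w * - deriv G w) \<le> M" if "norm w < 1" for w
  proof (rule Schwarz_Lemma_factor_bound[OF _ _ that])
    show "(\<lambda>w. w * - deriv G w) holomorphic_on ball 0 1"
      by (intro holomorphic_on_mult holomorphic_on_minus holomorphic_on_ident holdG)
    show "norm (v * (v * - deriv G v)) \<le> M" if "norm v < 1" for v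
    proof -
      have "Q v = 1 + v * G v"
        using QG[OF that] by (simp add: algebra_simps)
      then show ?thesis
        using bound[OF that] by (simp add: dQ that algebra_simps)
    qed
  qed
  then have dG_bound: "norm (deriv G w) \<le> M" if "norm w < 1" for w
    using Schwarz_Lemma_factor_bound[OF holomorphic_on_minus[OF holdG]] that by auto
  have "norm (G z - G 0) \<le> M * norm (z - 0)"
  proof (rule field_differentiable_bound[where S = "ball 0 1" and f' = "deriv G"])
    show "(G has_field_derivative deriv G w) (at w within ball 0 1)" if "w \<in> ball 0 1" for w
      using holG that by (auto intro: holomorphic_derivI)
  qed (use z dG_bound in auto)
  then have "norm z * norm (G z) \<le> norm z * (M * norm z)"
    by (simp add: G0 mult_left_mono)
  then show ?thesis
    using z by (simp add: QG norm_mult power2_eq_square mult_ac)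
qed

lemma subordinate_one_plus_quadratic:
  assumes holg: "g holomorphic_on unit_disk" and g0: "g 0 = 1"
    and bound: "\<And>z. z \<in> unit_disk \<Longrightarrow> norm (g z - 1) < lam"
  shows "subordinate g (\<lambda>z. 1 + 2 * of_real lam * z + of_real lam * z\<^sup>2)"
proof -
  have lam: "0 < lam"
    using bound[of 0] g0 by simp
  define \<phi> where "\<phi> z = (g z - 1) / of_real lam" for z
  have \<phi>_less: "norm (\<phi> z) < 1" if "z \<in> unit_disk" for z
    using bound[OF that] lam by (simp add: \<phi>_def norm_divide)
  \<comment> \<open>\<open>\<omega>\<close> solves \<open>(1 + \<omega>)\<^sup>2 = 1 + \<phi>\<close>, which is the subordination equation divided by \<open>lam\<close>.\<close>
  define \<omega> where "\<omega> z = csqrt (1 + \<phi> z) - 1" for z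
  have "1 + \<phi> z \<notin> \<real>\<^sub>\<le>\<^sub>0" if "z \<in> unit_disk" for z
    using abs_Re_le_cmod[of "\<phi> z"] \<phi>_less[OF that] by (simp add: complex_nonpos_Reals_iff)
  then have "\<omega> holomorphic_on unit_disk"
    unfolding \<omega>_def \<phi>_def using holg lam by (intro holomorphic_intros) auto
  moreover have "\<omega> ` unit_disk \<subseteq> unit_disk"
    using \<phi>_less norm_csqrt_one_plus_minus_one_le by (fastforce simp: \<omega>_def intro: le_less_trans)
  moreover have "\<omega> 0 = 0"
    by (simp add: \<omega>_def \<phi>_def g0)
  moreover have "g z = 1 + 2 * of_real lam * \<omega> z + of_real lam * (\<omega> z)\<^sup>2" for z
  proof -
    have "(\<omega> z + 1)\<^sup>2 = 1 + (g z - 1) / of_real lam"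
      by (simp add: \<omega>_def \<phi>_def)
    then show ?thesis
      using lam by (simp add: field_simps power2_eq_square)
  qed
  ultimately show ?thesis
    unfolding subordinate_def by blast
qed

lemma deriv2_mult_id_0:
  assumes holh: "h holomorphic_on S" and S: "open S" "0 \<in> S"
    and f: "\<And>z. z \<in> S \<Longrightarrow> f z = z * h z"
  shows "(deriv ^^ 2) f 0 = 2 * deriv h 0"
proof -
  have holdh: "deriv h holomorphic_on S"
    using holh S(1) by (rule holomorphic_deriv)
  have df: "deriv f z = h z + z * deriv h z" if "z \<in> S" for z
  proof -
    have "((\<lambda>w. w * h w) has_field_derivative h z + z * deriv h z) (at z)"
      using holh S that by (auto intro!: derivative_eq_intros holomorphic_derivI)
    then have "(f has_field_derivative h z + z * deriv h z) (at z)"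
      by (rule has_field_derivative_transform_within_open[where S = S]) (use S that f in auto)
    then show ?thesis
      by (rule DERIV_imp_deriv)
  qed
  have "((\<lambda>w. h w + w * deriv h w) has_field_derivative 2 * deriv h 0) (at 0)"
    using holh holdh S by (auto intro!: derivative_eq_intros holomorphic_derivI)
  then have "(deriv f has_field_derivative 2 * deriv h 0) (at 0)"
    by (rule has_field_derivative_transform_within_open[where S = S]) (use S df in auto)
  then show ?thesis
    by (simp add: DERIV_imp_deriv numeral_2_eq_2)
qed

lemma z_over_f_inverse_factor:
  assumes "class_A f" "\<forall>z\<in>unit_disk - {0}. f z \<noteq> 0"
  obtains h where "h holomorphic_on unit_disk"
    "\<And>z. z \<in> unit_disk \<Longrightarrow> f z = z * h z"
    "\<And>z. z \<in> unit_disk \<Longrightarrow> h z \<noteq> 0"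
    "\<And>z. z \<in> unit_disk \<Longrightarrow> z_over_f f z = 1 / h z"
proof -
  have holf: "f holomorphic_on unit_disk" and f0: "f 0 = 0" and df0: "deriv f 0 = 1"
    using assms(1) by (auto simp: class_A_def)
  obtain h where holh: "h holomorphic_on unit_disk"
    and fh: "\<And>z. norm z < 1 \<Longrightarrow> f z = z * h z" and h0: "deriv f 0 = h 0"
    using Schwarz3[OF holf f0] by blast
  have hnz: "h z \<noteq> 0" if "z \<in> unit_disk" for z
    using that assms(2) fh[of z] h0 df0 by (cases "z = 0") auto
  have "z_over_f f z = 1 / h z" if "z \<in> unit_disk" for z
    using that fh[of z] h0 df0 by (auto simp: z_over_f_def)
  with holh fh hnz show ?thesis
    by (intro that) auto
qed

lemma holomorphic_z_over_f:
  assumes "class_A f" "\<forall>z\<in>unit_disk - {0}. f z \<noteq> 0"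
  shows "z_over_f f holomorphic_on unit_disk"
proof -
  obtain h where holh: "h holomorphic_on unit_disk" and "\<And>z. z \<in> unit_disk \<Longrightarrow> f z = z * h z"
    and hnz: "\<And>z. z \<in> unit_disk \<Longrightarrow> h z \<noteq> 0"
    and ph: "\<And>z. z \<in> unit_disk \<Longrightarrow> z_over_f f z = 1 / h z"
    using z_over_f_inverse_factor[OF assms] by blast
  have "(\<lambda>z. 1 / h z) holomorphic_on unit_disk"
    using holh hnz by (intro holomorphic_intros) auto
  then show ?thesis
    by (rule holomorphic_transform) (simp add: ph)
qed

lemma deriv_z_over_f_0:
  assumes "class_A f" "\<forall>z\<in>unit_disk - {0}. f z \<noteq> 0"
  shows "deriv (z_over_f f) 0 = - (deriv ^^ 2) f 0 / 2"
proof -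
  obtain h where holh: "h holomorphic_on unit_disk" and fh: "\<And>z. z \<in> unit_disk \<Longrightarrow> f z = z * h z"
    and "\<And>z. z \<in> unit_disk \<Longrightarrow> h z \<noteq> 0"
    and ph: "\<And>z. z \<in> unit_disk \<Longrightarrow> z_over_f f z = 1 / h z"
    using z_over_f_inverse_factor[OF assms] by blast
  have h0: "h 0 = 1"
    using ph[of 0] by (simp add: z_over_f_def)
  have "((\<lambda>z. 1 / h z) has_field_derivative - deriv h 0) (at 0)"
    using holh h0 by (auto intro!: derivative_eq_intros holomorphic_derivI)
  then have "(z_over_f f has_field_derivative - deriv h 0) (at 0)"
    by (rule has_field_derivative_transform_within_open[where S = unit_disk]) (use ph in auto)
  then show ?thesis
    using deriv2_mult_id_0[OF holh _ _ fh] by (simp add: DERIV_imp_deriv)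
qed

lemma U_op_eq_z_over_f:
  assumes "class_A f" "\<forall>z\<in>unit_disk - {0}. f z \<noteq> 0" and z: "z \<in> unit_disk"
  shows "U_op f z = z_over_f f z - z * deriv (z_over_f f) z - 1"
proof (cases "z = 0")
  case True
  then show ?thesis
    using assms(1) by (simp add: U_op_def z_over_f_def class_A_def)
next
  case False
  have holf: "f holomorphic_on unit_disk"
    using assms(1) by (simp add: class_A_def)
  have fz: "f z \<noteq> 0"
    using assms(2) z False by blast
  have "((\<lambda>w. w / f w) has_field_derivative (f z - z * deriv f z) / (f z)\<^sup>2) (at z)"
    using holf z fz by (auto intro!: derivative_eq_intros holomorphic_derivI simp: power2_eq_square)
  then have "(z_over_f f has_field_derivative (f z - z * deriv f z) / (f z)\<^sup>2) (at z)"
    by (rule has_field_derivative_transform_within_open[where S = "unit_disk - {0}"])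
       (use z False in \<open>auto simp: z_over_f_def\<close>)
  then have "deriv (z_over_f f) z = (f z - z * deriv f z) / (f z)\<^sup>2"
    by (rule DERIV_imp_deriv)
  then show ?thesis
    using False fz by (simp add: U_op_def z_over_f_def power2_eq_square) (simp add: field_simps)
qed

theorem theorem3p1:
  fixes lam :: real and f :: "complex \<Rightarrow> complex"
  assumes "0 < lam" "lam \<le> 1"
    and "class_U lam f"
  shows "subordinate
           (\<lambda>z. z_over_f f z + ((deriv ^^ 2) f 0 / 2) * z)
           (\<lambda>z. 1 + 2 * complex_of_real lam * z + complex_of_real lam * z\<^sup>2)"
proof -
  have A: "class_A f" and N: "\<forall>z\<in>unit_disk - {0}. f z \<noteq> 0"
    and U: "\<And>z. z \<in> unit_disk \<Longrightarrow> norm (U_op f z) < lam"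
    using assms(3) by (auto simp: class_U_def)
  define a2 where "a2 = (deriv ^^ 2) f 0 / 2"
  define g where "g z = z_over_f f z + a2 * z" for z
  have holp: "z_over_f f holomorphic_on unit_disk"
    using A N by (rule holomorphic_z_over_f)
  then have holg: "g holomorphic_on unit_disk"
    unfolding g_def by (intro holomorphic_intros)
  have dg: "deriv g z = deriv (z_over_f f) z + a2" if "z \<in> unit_disk" for z
    unfolding g_def using holp that by (simp add: holomorphic_on_imp_differentiable_at)
  have g0: "g 0 = 1"
    by (simp add: g_def z_over_f_def)
  have dg0: "deriv g 0 = 0"
    using dg[of 0] deriv_z_over_f_0[OF A N] by (simp add: a2_def)
  have "norm (g z - z * deriv g z - 1) \<le> lam" if "norm z < 1" for z
    using U[of z] U_op_eq_z_over_f[OF A N, of z] dg[of z] that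
    by (simp add: g_def algebra_simps)
  then have g_bound: "norm (g z - 1) \<le> lam * norm z ^ 2" if "norm z < 1" for z
    using norm_sub_one_le_of_norm_sub_mult_deriv_le[OF holg g0 dg0] that by blast
  have "norm (g z - 1) < lam" if "z \<in> unit_disk" for z
  proof -
    have "lam * norm z ^ 2 < lam * 1"
      using that assms(1) by (intro mult_strict_left_mono) (auto simp: power_less_one_iff)
    then show ?thesis
      using g_bound[of z] that by simp
  qed
  then show ?thesis
    using subordinate_one_plus_quadratic[OF holg g0] by (simp add: g_def a2_def)
qed

end
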